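(* Let $p\geq 3$ be a prime and $s$ a positive integer. Then for every integer $n>p^{s}$ we have $$\nu_{p}\big(A_{p,(p-1)(p^s-1)}(n)\big)=1.$$
   Context: For an integer $m\geq 2$ and a positive integer $k$, the integers $A_{m,k}(n)$, $n\in\mathbb{N}=\{0,1,2,\ldots\}$, are defined by the formal power series identity $\prod_{i=0}^{\infty}\big(1-x^{m^{i}}\big)^{-k}=\sum_{n=0}^{\infty}A_{m,k}(n)x^{n}$. For a prime $p$, $\nu_p(n)$ denotes the $p$-adic valuation of the integer $n$, with $\nu_p(0)=+\infty$. *)

theory Defs
  imports "HOL-Computational_Algebra.Computational_Algebra"
begin

text \<open>Coefficients of prod_{i>=0} (1 - x^(m^i))^(-k), computed in rat fps.
  Only factors with m^i <= n influence the coefficient of x^n; since m >= 2 gives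
  m^i > n for i > n, truncating the product to i < n+1 is exact.\<close>
definition A_rat :: "nat \<Rightarrow> nat \<Rightarrow> nat \<Rightarrow> rat" where
  "A_rat m k n = fps_nth (\<Prod>i<Suc n. (inverse (1 - fps_X ^ (m ^ i) :: rat fps)) ^ k) n"

definition A :: "nat \<Rightarrow> nat \<Rightarrow> nat \<Rightarrow> int" where
  "A m k n = (THE a::int. of_int a = A_rat m k n)"

end

theory Submission
  imports Defs
begin

text \<open>
  Over the integers, A(n) is the n-th coefficient of F^((p-1)K), where
  F = prod_{i<N} 1/(1 - X^(p^i)) with p^N > n and K = p^s - 1. For odd p the binomial theorem
  gives (1 - X^m)^p = (1 - X^(pm)) (1 - p rho_m) for an explicit integral series rho_m, so modulo
  p^2 we have F^p = prod_{i<N} 1/(1 - X^(p^(i+1))) * (1 + p R) with R = sum_{i<N} rho_(p^i).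
  Dividing by F telescopes to F^(p-1) = (1 - X) (1 + p R) / (1 - X^(p^N)), and since K = -1 mod p,
  F^((p-1)K) = (1 - X)^K (1 - p R) in degrees below p^N. As (1 - X)^K has degree K < n, this
  gives A(n) = -p [X^n] (1 - X)^K R mod p^2.

  Modulo p, (1 - X)^K = 1 + X + ... + X^K, so [X^n] (1 - X)^K R is a sum of p^s consecutive
  coefficients of R. The coefficient R_N is c(d), where d is the last nonzero base-p digit of N and
  c(j) = (-1)^(j+1) (p choose j) / p. The c(j) are prime to p and sum to 0 over 0 < j < p, so in a
  window of length p^s the non-multiples of p cancel, while the multiples p b form a window of
  length p^(s-1) in b. By induction the window sum is a single coefficient R_b, prime to p.
\<close>

section \<open>Periodic sums and valuations\<close>

lemma sum_periodic_shift:
  fixes f :: "nat \<Rightarrow> 'a::comm_monoid_add"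
  assumes "\<And>N. f (N + p) = f N"
  shows "(\<Sum>N\<in>{c..<c + p}. f N) = (\<Sum>N<p. f N)"
proof (induction c)
  case 0
  show ?case by (simp add: atLeast0LessThan)
next
  case (Suc c)
  show ?case
  proof (cases "p = 0")
    case False
    have "(\<Sum>N\<in>{c..<c + p}. f N) = f c + (\<Sum>N\<in>{Suc c..<c + p}. f N)"
      using False by (intro sum.atLeast_Suc_lessThan) simp
    moreover have "(\<Sum>N\<in>{Suc c..<Suc c + p}. f N) = (\<Sum>N\<in>{Suc c..<c + p}. f N) + f (c + p)"
      using False by (simp add: sum.atLeastLessThan_Suc)
    ultimately show ?thesis
      using Suc assms[of c] by (simp add: add.commute)
  qed simp
qed

lemma sum_periodic_blocks_eq_0:
  fixes f :: "nat \<Rightarrow> 'a::comm_monoid_add"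
  assumes "\<And>N. f (N + p) = f N" "(\<Sum>N<p. f N) = 0"
  shows "(\<Sum>N\<in>{c..<c + p * L}. f N) = 0"
proof (induction L)
  case (Suc L)
  have "c + p * Suc L = c + p * L + p"
    by simp
  then have "(\<Sum>N\<in>{c..<c + p * Suc L}. f N)
      = (\<Sum>N\<in>{c..<c + p * L}. f N) + (\<Sum>N\<in>{c + p * L..<c + p * L + p}. f N)"
    by (simp only: sum.atLeastLessThan_concat le_add1)
  then show ?case
    using Suc sum_periodic_shift[of f p] assms by simp
qed simp

lemma multiples_in_interval:
  assumes "p > 0"
  shows "{N \<in> {Suc c..<Suc c + p * L}. p dvd N} = (\<lambda>b. p * b) ` {Suc (c div p)..<Suc (c div p) + L}"
proof -
  have "c < p * b \<longleftrightarrow> c div p < b" for b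
    using div_less_iff_less_mult[OF assms] by (simp add: mult.commute)
  moreover have "p * b \<le> c + p * L \<longleftrightarrow> b \<le> c div p + L" for b
    using less_eq_div_iff_mult_less_eq[OF assms, of b "c + p * L"] assms by (simp add: ac_simps)
  ultimately show ?thesis
    by (auto elim!: dvdE simp: Suc_le_eq less_Suc_eq_le)
qed

lemma less_power_Suc_self:
  fixes p :: nat
  assumes "1 < p"
  shows "n < p ^ Suc n"
proof -
  have "n < 2 ^ n"
    by (rule less_exp)
  also have "\<dots> \<le> p ^ n"
    using assms by (intro power_mono) auto
  also have "\<dots> < p ^ Suc n"
    using assms by simp
  finally show ?thesis .
qed

lemma multiplicity_eq_1_if_dvd_add:
  fixes q a t :: int
  assumes "q \<noteq> 0" "q ^ 2 dvd a + q * t" "\<not> q dvd t"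
  shows "multiplicity q a = 1"
proof (rule multiplicity_eqI)
  have "q dvd a + q * t"
    using assms(2) by (rule dvd_trans[rotated]) (simp add: power2_eq_square)
  then show "q ^ 1 dvd a"
    by (simp add: dvd_add_left_iff)
  show "\<not> q ^ Suc 1 dvd a"
  proof
    assume "q ^ Suc 1 dvd a"
    then have "q * q dvd q * t"
      using assms(2) by (simp add: power2_eq_square dvd_add_right_iff)
    then show False
      using assms(1,3) by simp
  qed
qed

section \<open>Congruences of power series\<close>

definition fps_cong :: "'a::comm_ring_1 \<Rightarrow> 'a fps \<Rightarrow> 'a fps \<Rightarrow> bool" where
  "fps_cong q f g \<longleftrightarrow> fps_const q dvd f - g"

lemma fps_congI: "f = g + fps_const q * h \<Longrightarrow> fps_cong q f g"
  unfolding fps_cong_def by simp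

lemma fps_cong_refl [simp]: "fps_cong q f f"
  by (simp add: fps_cong_def)

lemma fps_cong_trans [trans]: "fps_cong q f g \<Longrightarrow> fps_cong q g h \<Longrightarrow> fps_cong q f h"
  unfolding fps_cong_def by (metis diff_add_cancel add_diff_eq dvd_add)

lemma fps_cong_mult:
  assumes "fps_cong q f g" "fps_cong q f' g'"
  shows "fps_cong q (f * f') (g * g')"
proof -
  have "f * f' - g * g' = f * (f' - g') + (f - g) * g'"
    by (simp add: algebra_simps)
  then show ?thesis
    using assms unfolding fps_cong_def by (simp add: dvd_add dvd_mult dvd_mult2)
qed

lemma fps_cong_power: "fps_cong q f g \<Longrightarrow> fps_cong q (f ^ k) (g ^ k)"
  by (induction k) (simp_all add: fps_cong_mult)

lemma fps_cong_prod:
  "(\<And>i. i \<in> I \<Longrightarrow> fps_cong q (f i) (g i)) \<Longrightarrow> fps_cong q (\<Prod>i\<in>I. f i) (\<Prod>i\<in>I. g i)"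
  by (induction I rule: infinite_finite_induct) (simp_all add: fps_cong_mult)

lemma fps_cong_nth:
  assumes "fps_cong q f g"
  shows "q dvd f $ n - g $ n"
proof -
  obtain h where "f - g = fps_const q * h"
    using assms unfolding fps_cong_def by (elim dvdE)
  then have "f $ n - g $ n = q * h $ n"
    by (metis fps_sub_nth fps_mult_left_const_nth)
  then show ?thesis by simp
qed

lemma fps_cong_prod_one_plus:
  "fps_cong (q ^ 2) (\<Prod>i\<in>I. 1 + fps_const q * a i) (1 + fps_const q * (\<Sum>i\<in>I. a i))"
proof (induction I rule: infinite_finite_induct)
  case (insert i I)
  let ?S = "\<Sum>i\<in>I. a i"
  have "fps_cong (q ^ 2) (\<Prod>i\<in>insert i I. 1 + fps_const q * a i)
      ((1 + fps_const q * a i) * (1 + fps_const q * ?S))"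
    using insert by (simp add: fps_cong_mult)
  also have "(1 + fps_const q * a i) * (1 + fps_const q * ?S)
      = 1 + fps_const q * (a i + ?S) + fps_const (q ^ 2) * (a i * ?S)"
    by (simp add: algebra_simps power2_eq_square flip: fps_const_mult)
  also have "fps_cong (q ^ 2) \<dots> (1 + fps_const q * (\<Sum>i\<in>insert i I. a i))"
    using insert by (intro fps_congI) simp
  finally show ?case .
qed simp_all

section \<open>Geometric series\<close>

definition geom_fps :: "nat \<Rightarrow> 'a::comm_ring_1 fps" where
  "geom_fps m = Abs_fps (\<lambda>j. if m dvd j then 1 else 0)"

lemma one_minus_X_power_mult_geom_fps:
  assumes "m > 0"
  shows "(1 - fps_X ^ m) * geom_fps m = (1 :: 'a::comm_ring_1 fps)"
proof (rule fps_ext)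
  fix j
  have "((1 - fps_X ^ m) * geom_fps m) $ j
      = geom_fps m $ j - (fps_X ^ m * geom_fps m :: 'a fps) $ j"
    by (simp add: algebra_simps)
  also have "\<dots> = (1 :: 'a fps) $ j"
    using assms by (auto simp: fps_X_power_mult_nth geom_fps_def dvd_minus_self elim: dvdE)
  finally show "((1 - fps_X ^ m) * geom_fps m) $ j = (1 :: 'a fps) $ j" .
qed

lemma inverse_one_minus_X_power:
  "m > 0 \<Longrightarrow> inverse (1 - fps_X ^ m :: 'a::field fps) = geom_fps m"
  by (rule fps_inverse_unique) (rule one_minus_X_power_mult_geom_fps)

lemma geom_fps_power_mult_nth:
  assumes "0 < M" "n < M"
  shows "(f * geom_fps M ^ K) $ n = f $ n"
proof (induction K)
  case (Suc K)
  have "geom_fps M = 1 + fps_X ^ M * geom_fps M"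
    using one_minus_X_power_mult_geom_fps[OF assms(1)] by (simp add: algebra_simps)
  then have "f * geom_fps M ^ Suc K = f * geom_fps M ^ K + fps_X ^ M * (f * geom_fps M ^ Suc K)"
    by (metis (no_types, lifting) distrib_left mult.left_commute mult.right_neutral power_Suc2)
  then have "(f * geom_fps M ^ Suc K) $ n
      = (f * geom_fps M ^ K) $ n + (fps_X ^ M * (f * geom_fps M ^ Suc K)) $ n"
    by (metis fps_add_nth)
  then show ?case
    using Suc assms(2) by (simp only: fps_X_power_mult_nth if_True add_0_right)
qed simp

lemma prod_geom_fps_telescope:
  assumes "m > 0"
  shows "(\<Prod>i<N. geom_fps (m ^ Suc i)) * (\<Prod>i<N. 1 - fps_X ^ (m ^ i))
    = (1 - fps_X) * (geom_fps (m ^ N) :: 'a::comm_ring_1 fps)"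
proof (induction N)
  case 0
  show ?case using one_minus_X_power_mult_geom_fps[of 1] by simp
next
  case (Suc N)
  have "(\<Prod>i<Suc N. geom_fps (m ^ Suc i)) * (\<Prod>i<Suc N. 1 - fps_X ^ (m ^ i))
      = ((\<Prod>i<N. geom_fps (m ^ Suc i)) * (\<Prod>i<N. 1 - fps_X ^ (m ^ i)))
        * ((1 - fps_X ^ (m ^ N)) * geom_fps (m ^ Suc N) :: 'a fps)"
    by (simp add: mult_ac)
  also have "\<dots> = (1 - fps_X) * geom_fps (m ^ N) * ((1 - fps_X ^ (m ^ N)) * geom_fps (m ^ Suc N))"
    using Suc.IH by simp
  also have "\<dots> = (1 - fps_X) * geom_fps (m ^ Suc N) * ((1 - fps_X ^ (m ^ N)) * geom_fps (m ^ N))"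
    by (simp only: mult_ac)
  also have "\<dots> = (1 - fps_X) * geom_fps (m ^ Suc N)"
    using assms by (simp add: one_minus_X_power_mult_geom_fps)
  finally show ?case .
qed

lemma window_sum_nth:
  assumes "L \<le> n"
  shows "((1 - fps_X ^ L) * geom_fps 1 * R) $ n
    = (\<Sum>N\<in>{Suc (n - L)..<Suc n}. R $ N :: 'a::comm_ring_1)"
proof -
  have window: "((1 - fps_X ^ L) * geom_fps 1 :: 'a fps) $ i = (if i < L then 1 else 0)" for i
  proof -
    have "(1 - fps_X ^ L) * geom_fps 1 = geom_fps 1 - fps_X ^ L * (geom_fps 1 :: 'a fps)"
      by (simp add: algebra_simps)
    then show ?thesis by (simp add: fps_X_power_mult_nth geom_fps_def)
  qed
  have "((1 - fps_X ^ L) * geom_fps 1 * R) $ n = (\<Sum>i=0..n. (if i < L then 1 else 0) * R $ (n - i))"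
    unfolding fps_mult_nth[of "(1 - fps_X ^ L) * geom_fps 1" R] window ..
  also have "\<dots> = (\<Sum>i<L. R $ (n - i))"
    by (rule sum.mono_neutral_cong_right) (use assms in auto)
  also have "\<dots> = (\<Sum>N\<in>{Suc (n - L)..<Suc n}. R $ N)"
    by (rule sum.reindex_bij_witness[where i="\<lambda>N. n - N" and j="\<lambda>i. n - i"]) (use assms in auto)
  finally show ?thesis .
qed

lemma one_minus_X_power_nth_eq_0: "K < j \<Longrightarrow> ((1 - fps_X) ^ K :: 'a::comm_ring_1 fps) $ j = 0"
proof (induction K arbitrary: j)
  case (Suc K)
  have "((1 - fps_X) ^ Suc K :: 'a fps) = (1 - fps_X) ^ K - fps_X * (1 - fps_X) ^ K"
    by (simp add: algebra_simps)
  then show ?case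
    using Suc.IH[of j] Suc.IH[of "j - 1"] Suc.prems by (simp only: fps_sub_nth fps_X_mult_nth) simp
qed simp

definition of_int_fps :: "int fps \<Rightarrow> 'a::comm_ring_1 fps" where
  "of_int_fps f = Abs_fps (\<lambda>n. of_int (f $ n))"

lemma of_int_fps_nth [simp]: "of_int_fps f $ n = of_int (f $ n)"
  by (simp add: of_int_fps_def)

lemma of_int_fps_mult: "of_int_fps (f * g) = of_int_fps f * of_int_fps g"
  by (rule fps_ext) (simp add: fps_mult_nth)

lemma of_int_fps_one: "of_int_fps 1 = 1"
  by (rule fps_ext) simp

lemma of_int_fps_power: "of_int_fps (f ^ k) = of_int_fps f ^ k"
  by (induction k) (simp_all add: of_int_fps_one of_int_fps_mult)

lemma of_int_fps_prod: "of_int_fps (\<Prod>i\<in>I. f i) = (\<Prod>i\<in>I. of_int_fps (f i))"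
  by (induction I rule: infinite_finite_induct) (simp_all add: of_int_fps_one of_int_fps_mult)

lemma of_int_fps_geom_fps: "of_int_fps (geom_fps m) = geom_fps m"
  by (rule fps_ext) (simp add: geom_fps_def)

lemma A_eq_nth:
  assumes "m > 0"
  shows "A m k n = ((\<Prod>i<Suc n. geom_fps (m ^ i)) ^ k) $ n"
proof -
  have "inverse (1 - fps_X ^ (m ^ i) :: rat fps) = geom_fps (m ^ i)" for i
    using assms by (simp add: inverse_one_minus_X_power)
  then have "A_rat m k n = of_int_fps ((\<Prod>i<Suc n. geom_fps (m ^ i)) ^ k) $ n"
    unfolding A_rat_def of_int_fps_power of_int_fps_prod of_int_fps_geom_fps
    by (simp only: prod_power_distrib)
  then show ?thesis
    unfolding A_def by (intro the_equality) simp_all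
qed

section \<open>The \<open>p\<close>-th power of \<open>1 - X\<^sup>m\<close>\<close>

definition mid_coeff :: "nat \<Rightarrow> nat \<Rightarrow> int" where
  "mid_coeff p j = - ((-1) ^ j * int ((p choose j) div p))"

definition mid_fps :: "nat \<Rightarrow> nat \<Rightarrow> int fps" where
  "mid_fps p m = (\<Sum>j\<in>{0<..<p}. fps_const (mid_coeff p j) * fps_X ^ (m * j))"

lemma prime_times_mid_coeff:
  assumes "prime p" "0 < j" "j < p"
  shows "int p * mid_coeff p j = - ((-1) ^ j * int (p choose j))"
proof -
  have "p dvd (p choose j)"
    using assms by (intro dvd_choose_prime) auto
  then show ?thesis
    unfolding mid_coeff_def by (auto elim!: dvdE)
qed

lemma sum_mid_coeff:
  assumes "prime p" "odd p"
  shows "(\<Sum>j\<in>{0<..<p}. mid_coeff p j) = 0"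
proof -
  have p: "0 < p" using assms(1) prime_gt_0_nat by blast
  have "{..p} = insert 0 (insert p {0<..<p})"
    using p by auto
  then have "(\<Sum>j\<le>p. (-1) ^ j * int (p choose j)) = (\<Sum>j\<in>{0<..<p}. (-1) ^ j * int (p choose j))"
    using p assms(2) by simp
  then have "(\<Sum>j\<in>{0<..<p}. (-1) ^ j * int (p choose j)) = 0"
    using choose_alternating_sum[OF p, where 'a=int] by simp
  then have "int p * (\<Sum>j\<in>{0<..<p}. mid_coeff p j) = 0"
    by (simp add: sum_distrib_left prime_times_mid_coeff[OF assms(1)] sum_negf)
  then show ?thesis
    using p by simp
qed

lemma prime_not_dvd_mid_coeff:
  assumes "prime p" "0 < j" "j < p"
  shows "\<not> int p dvd mid_coeff p j"
proof
  assume "int p dvd mid_coeff p j"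
  moreover have "\<bar>mid_coeff p j\<bar> = int ((p choose j) div p)"
    by (simp add: mid_coeff_def abs_mult power_abs)
  ultimately have "p dvd (p choose j) div p"
    by (metis dvd_abs_iff of_nat_dvd_iff)
  moreover have "p dvd (p choose j)"
    using assms by (intro dvd_choose_prime) auto
  ultimately have "p * p dvd p choose j"
    by (metis dvd_mult_div_cancel mult_dvd_mono dvd_refl)
  then have "p * p dvd j * (p choose j)"
    by (rule dvd_mult)
  then have "p * p dvd p * ((p - 1) choose (j - 1))"
    using assms(2) by (simp add: times_binomial_minus1_eq)
  then have "p dvd (p - 1) choose (j - 1)"
    using assms(3) by simp
  also have "\<dots> dvd fact (p - 1)"
    using assms by (metis binomial_fact_lemma diff_le_mono less_imp_le_nat dvd_triv_right)
  finally show False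
    using assms(1) prime_dvd_fact_iff[OF assms(1)] assms(3) by simp
qed

lemma one_minus_X_power_pow_prime_expand:
  assumes "prime p" "odd p"
  shows "(1 - fps_X ^ m :: int fps) ^ p = 1 - fps_X ^ (p * m) - fps_const (int p) * mid_fps p m"
proof -
  have p: "0 < p" using assms(1) prime_gt_0_nat by blast
  have "(1 - fps_X ^ m :: int fps) ^ p = (\<Sum>j\<le>p. of_nat (p choose j) * (- (fps_X ^ m)) ^ j)"
    using binomial_ring[of "- (fps_X ^ m) :: int fps" 1 p] by simp
  also have "{..p} = insert 0 (insert p {0<..<p})"
    using p by auto
  also have "(\<Sum>j\<in>insert 0 (insert p {0<..<p}). of_nat (p choose j) * (- (fps_X ^ m) :: int fps) ^ j)
      = 1 - fps_X ^ (p * m) + (\<Sum>j\<in>{0<..<p}. of_nat (p choose j) * (- (fps_X ^ m)) ^ j)"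
    using p assms(2) by (simp add: power_minus_odd power_mult mult.commute)
  also have "(\<Sum>j\<in>{0<..<p}. of_nat (p choose j) * (- (fps_X ^ m) :: int fps) ^ j)
      = (\<Sum>j\<in>{0<..<p}. - (fps_const (int p) * (fps_const (mid_coeff p j) * fps_X ^ (m * j))))"
  proof (rule sum.cong)
    fix j assume "j \<in> {0<..<p}"
    then have "int p * mid_coeff p j = - ((-1) ^ j * int (p choose j))"
      by (intro prime_times_mid_coeff[OF assms(1)]) auto
    then have coeff: "fps_const (int p) * fps_const (mid_coeff p j)
        = - fps_const ((-1) ^ j * int (p choose j))"
      by (simp only: fps_const_mult fps_const_neg)
    have "fps_const ((-1::int) ^ j) = (-1) ^ j"
      by (metis fps_const_neg fps_const_1_eq_1 fps_const_power)
    then have sign: "(- (fps_X ^ m) :: int fps) ^ j = fps_const ((-1) ^ j) * fps_X ^ (m * j)"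
      unfolding power_minus[of "fps_X ^ m" j] by (simp add: power_mult)
    have "of_nat (p choose j) * (- (fps_X ^ m) :: int fps) ^ j
        = fps_const ((-1) ^ j * int (p choose j)) * fps_X ^ (m * j)"
      unfolding sign fps_of_nat[symmetric] mult.assoc[symmetric] fps_const_mult
      by (simp only: mult.commute)
    also have "\<dots> = - (fps_const (int p) * (fps_const (mid_coeff p j) * fps_X ^ (m * j)))"
      unfolding mult.assoc[symmetric] coeff by simp
    finally show "of_nat (p choose j) * (- (fps_X ^ m) :: int fps) ^ j
        = - (fps_const (int p) * (fps_const (mid_coeff p j) * fps_X ^ (m * j)))" .
  qed simp
  finally show ?thesis
    by (simp add: mid_fps_def sum_distrib_left sum_negf)
qed

definition periodic_mid_coeff :: "nat \<Rightarrow> nat \<Rightarrow> int" where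
  "periodic_mid_coeff p q = (if p dvd q then 0 else mid_coeff p (q mod p))"

lemma periodic_mid_coeff_add_self [simp]: "periodic_mid_coeff p (q + p) = periodic_mid_coeff p q"
  by (simp add: periodic_mid_coeff_def)

lemma sum_periodic_mid_coeff:
  assumes "prime p" "odd p"
  shows "(\<Sum>q<p. periodic_mid_coeff p q) = 0"
proof -
  have "{..<p} = insert 0 {0<..<p}"
    using assms(1) prime_gt_0_nat by auto
  then have "(\<Sum>q<p. periodic_mid_coeff p q) = (\<Sum>q\<in>{0<..<p}. periodic_mid_coeff p q)"
    by (simp add: periodic_mid_coeff_def)
  also have "\<dots> = (\<Sum>q\<in>{0<..<p}. mid_coeff p q)"
  proof (rule sum.cong)
    fix q assume "q \<in> {0<..<p}"
    then have "\<not> p dvd q" "q mod p = q"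
      by (auto dest: dvd_imp_le)
    then show "periodic_mid_coeff p q = mid_coeff p q"
      by (simp add: periodic_mid_coeff_def)
  qed simp
  finally show ?thesis
    using sum_mid_coeff[OF assms] by simp
qed

lemma prime_not_dvd_periodic_mid_coeff:
  assumes "prime p" "\<not> p dvd q"
  shows "\<not> int p dvd periodic_mid_coeff p q"
proof -
  have "0 < q mod p" "q mod p < p"
    using assms prime_gt_0_nat[OF assms(1)] by (simp_all add: dvd_eq_mod_eq_0)
  then show ?thesis
    using assms(2) prime_not_dvd_mid_coeff[OF assms(1)] by (simp add: periodic_mid_coeff_def)
qed

text \<open>The series rho_m = mid_fps p m / (1 - X^(pm)), written out coefficientwise.\<close>
definition mid_quot :: "nat \<Rightarrow> nat \<Rightarrow> int fps" where
  "mid_quot p m = Abs_fps (\<lambda>N. if m dvd N then periodic_mid_coeff p (N div m) else 0)"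

lemma mid_fps_nth:
  assumes "m > 0"
  shows "mid_fps p m $ N = (if m dvd N \<and> N div m \<in> {0<..<p} then mid_coeff p (N div m) else 0)"
proof -
  have "mid_fps p m $ N = (\<Sum>j\<in>{0<..<p}. if j = N div m \<and> m dvd N then mid_coeff p j else 0)"
    unfolding mid_fps_def fps_sum_nth using assms by (intro sum.cong) auto
  also have "\<dots> = (if m dvd N \<and> N div m \<in> {0<..<p} then mid_coeff p (N div m) else 0)"
    by (auto simp: sum.delta')
  finally show ?thesis .
qed

lemma mid_quot_mult:
  assumes "m > 0"
  shows "mid_quot p m * (1 - fps_X ^ (p * m)) = mid_fps p m"
proof (rule fps_ext)
  fix N
  have "(mid_quot p m * (1 - fps_X ^ (p * m))) $ N
      = mid_quot p m $ N - (if N < p * m then 0 else mid_quot p m $ (N - p * m))"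
    by (simp add: algebra_simps fps_X_power_mult_nth fps_X_power_mult_right_nth)
  also have "\<dots> = mid_fps p m $ N"
  proof (cases "m dvd N")
    case False
    have "\<not> m dvd N - p * m" if "p * m \<le> N"
    proof
      assume "m dvd N - p * m"
      then have "m dvd N - p * m + p * m"
        by simp
      with that False show False
        by simp
    qed
    with False show ?thesis
      using assms by (simp add: mid_quot_def mid_fps_nth)
  next
    case True
    then obtain q where N: "N = m * q" ..
    show ?thesis
    proof (cases "q < p")
      case True
      then show ?thesis
        using N assms
        by (auto simp: mid_quot_def mid_fps_nth periodic_mid_coeff_def dest: dvd_imp_le)
    next
      case False
      have "N - p * m = m * (q - p)"
        using N by (simp add: diff_mult_distrib2 mult.commute)
      then have "mid_quot p m $ (N - p * m) = periodic_mid_coeff p (q - p + p)"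
        using assms by (simp add: mid_quot_def)
      also have "\<dots> = mid_quot p m $ N"
        using N False assms by (simp add: mid_quot_def)
      finally show ?thesis
        using N False assms by (simp add: mid_fps_nth)
    qed
  qed
  finally show "(mid_quot p m * (1 - fps_X ^ (p * m))) $ N = mid_fps p m $ N" .
qed

lemma one_minus_X_power_pow_prime:
  assumes "prime p" "odd p" "m > 0"
  shows "(1 - fps_X ^ m) ^ p = (1 - fps_X ^ (p * m)) * (1 - fps_const (int p) * mid_quot p m)"
  unfolding one_minus_X_power_pow_prime_expand[OF assms(1,2)] mid_quot_mult[OF assms(3), symmetric]
  by (simp add: algebra_simps)

lemma geom_fps_pow_prime_cong:
  assumes "prime p" "odd p" "m > 0"
  shows "fps_cong (int p ^ 2) (geom_fps m ^ p)
    (geom_fps (p * m) * (1 + fps_const (int p) * mid_quot p m))"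
proof -
  define Y where "Y = (geom_fps m :: int fps) ^ p"
  define Z where "Z = fps_const (int p) * mid_quot p m"
  have "Y * (1 - fps_X ^ m) ^ p = ((1 - fps_X ^ m) * geom_fps m) ^ p"
    unfolding Y_def power_mult_distrib by (rule mult.commute)
  then have "Y * (1 - fps_X ^ m) ^ p = 1"
    by (simp add: one_minus_X_power_mult_geom_fps assms(3))
  then have "Y * (1 - Z) * ((1 - fps_X ^ (p * m)) * geom_fps (p * m)) = geom_fps (p * m)"
    unfolding one_minus_X_power_pow_prime[OF assms] Z_def by (simp add: mult_ac)
  then have G: "geom_fps (p * m) = Y * (1 - Z)"
    using assms prime_gt_0_nat by (simp add: one_minus_X_power_mult_geom_fps)
  have "Y = geom_fps (p * m) * (1 + Z) + Z ^ 2 * Y"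
    unfolding G by (simp add: algebra_simps power2_eq_square)
  also have "Z ^ 2 = fps_const (int p ^ 2) * mid_quot p m ^ 2"
    unfolding Z_def by (simp add: power_mult_distrib fps_const_power)
  finally have "Y = geom_fps (p * m) * (1 + Z) + fps_const (int p ^ 2) * (mid_quot p m ^ 2 * Y)"
    by (simp only: mult.assoc)
  then show ?thesis
    unfolding Y_def Z_def by (rule fps_congI)
qed

lemma one_minus_X_pow_prime_power_cong:
  assumes "prime p" "odd p"
  shows "fps_cong (int p) ((1 - fps_X) ^ (p ^ s)) (1 - fps_X ^ (p ^ s))"
proof (induction s)
  case (Suc s)
  have "(1 - fps_X :: int fps) ^ (p ^ Suc s) = ((1 - fps_X) ^ (p ^ s)) ^ p"
    by (simp add: power_mult[symmetric] mult.commute)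
  also have "fps_cong (int p) \<dots> ((1 - fps_X ^ (p ^ s)) ^ p)"
    using Suc by (rule fps_cong_power)
  also have "(1 - fps_X ^ (p ^ s) :: int fps) ^ p
      = (1 - fps_X ^ (p ^ Suc s))
        + fps_const (int p) * (- (1 - fps_X ^ (p ^ Suc s)) * mid_quot p (p ^ s))"
    using assms prime_gt_0_nat by (simp add: one_minus_X_power_pow_prime algebra_simps)
  also have "fps_cong (int p) \<dots> (1 - fps_X ^ (p ^ Suc s))"
    by (rule fps_congI) (rule refl)
  finally show ?case .
qed simp

section \<open>The generating function modulo \<open>p\<^sup>2\<close>\<close>

lemma prod_geom_fps_pow_prime_cong:
  assumes "prime p" "odd p"
  shows "fps_cong (int p ^ 2) ((\<Prod>i<N. geom_fps (p ^ i)) ^ p)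
    ((\<Prod>i<N. geom_fps (p ^ Suc i)) * (1 + fps_const (int p) * (\<Sum>i<N. mid_quot p (p ^ i))))"
proof -
  have "(\<Prod>i<N. geom_fps (p ^ i) :: int fps) ^ p = (\<Prod>i<N. geom_fps (p ^ i) ^ p)"
    by (rule prod_power_distrib)
  also have "fps_cong (int p ^ 2) \<dots>
      (\<Prod>i<N. geom_fps (p ^ Suc i) * (1 + fps_const (int p) * mid_quot p (p ^ i)))"
    using geom_fps_pow_prime_cong[OF assms] prime_gt_0_nat[OF assms(1)]
    by (intro fps_cong_prod) simp
  also have "\<dots> = (\<Prod>i<N. geom_fps (p ^ Suc i)) * (\<Prod>i<N. 1 + fps_const (int p) * mid_quot p (p ^ i))"
    by (rule prod.distrib)
  also have "fps_cong (int p ^ 2) \<dots>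
      ((\<Prod>i<N. geom_fps (p ^ Suc i)) * (1 + fps_const (int p) * (\<Sum>i<N. mid_quot p (p ^ i))))"
    by (intro fps_cong_mult fps_cong_refl fps_cong_prod_one_plus)
  finally show ?thesis .
qed

lemma prod_geom_fps_pow_pred_prime_cong:
  assumes "prime p" "odd p"
  shows "fps_cong (int p ^ 2) ((\<Prod>i<N. geom_fps (p ^ i)) ^ (p - 1))
    ((1 - fps_X) * geom_fps (p ^ N) * (1 + fps_const (int p) * (\<Sum>i<N. mid_quot p (p ^ i))))"
proof -
  define F where "F = (\<Prod>i<N. geom_fps (p ^ i) :: int fps)"
  define G where "G = (\<Prod>i<N. 1 - fps_X ^ (p ^ i) :: int fps)"
  define S where "S = 1 + fps_const (int p) * (\<Sum>i<N. mid_quot p (p ^ i))"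
  have p: "p > 0"
    using assms(1) prime_gt_0_nat by blast
  have "G * F = (\<Prod>i<N. (1 - fps_X ^ (p ^ i)) * geom_fps (p ^ i))"
    unfolding F_def G_def by (simp only: prod.distrib)
  also have "\<dots> = 1"
    using p by (simp add: one_minus_X_power_mult_geom_fps)
  finally have "F ^ (p - 1) = F ^ p * G"
    using p by (cases p) (simp_all add: mult_ac)
  also have "fps_cong (int p ^ 2) (F ^ p * G) ((\<Prod>i<N. geom_fps (p ^ Suc i)) * S * G)"
    unfolding F_def S_def
    by (intro fps_cong_mult prod_geom_fps_pow_prime_cong[OF assms] fps_cong_refl)
  also have "(\<Prod>i<N. geom_fps (p ^ Suc i)) * S * G = (1 - fps_X) * geom_fps (p ^ N) * S"
    using prod_geom_fps_telescope[OF p, of N, where 'a=int] unfolding G_def by (simp add: mult_ac)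
  finally show ?thesis
    unfolding F_def S_def .
qed

lemma prod_geom_fps_pow_cong:
  assumes "prime p" "odd p" "s \<ge> 1"
  defines "K \<equiv> p ^ s - 1"
  shows "fps_cong (int p ^ 2) ((\<Prod>i<N. geom_fps (p ^ i)) ^ ((p - 1) * K))
    ((1 - fps_X) ^ K * geom_fps (p ^ N) ^ K * (1 - fps_const (int p) * (\<Sum>i<N. mid_quot p (p ^ i))))"
proof -
  define R where "R = (\<Sum>i<N. mid_quot p (p ^ i))"
  define P where "P = fps_const (int p)"
  have "fps_cong (int p ^ 2) ((\<Prod>i<N. geom_fps (p ^ i)) ^ ((p - 1) * K))
      (((1 - fps_X) * geom_fps (p ^ N) * (1 + P * R)) ^ K)"
    unfolding power_mult P_def R_def
    by (intro fps_cong_power prod_geom_fps_pow_pred_prime_cong[OF assms(1,2)])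
  also have "\<dots> = (1 - fps_X) ^ K * geom_fps (p ^ N) ^ K * (\<Prod>i<K. 1 + P * R)"
    by (simp add: power_mult_distrib)
  also have "fps_cong (int p ^ 2) \<dots> ((1 - fps_X) ^ K * geom_fps (p ^ N) ^ K * (1 + P * (\<Sum>i<K. R)))"
    unfolding P_def by (intro fps_cong_mult fps_cong_refl fps_cong_prod_one_plus)
  also have "fps_cong (int p ^ 2) \<dots> ((1 - fps_X) ^ K * geom_fps (p ^ N) ^ K * (1 - P * R))"
  proof (intro fps_cong_mult fps_cong_refl fps_congI)
    \<comment> \<open>\<open>K \<equiv> -1\<close> modulo \<open>p\<close>\<close>
    define Q where "Q = fps_const (int p ^ (s - 1))"
    have "int K = int p * int p ^ (s - 1) - 1"
      using assms(3) prime_gt_0_nat[OF assms(1)] unfolding K_def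
      by (simp add: of_nat_diff power_eq_if[of "int p" s])
    then have K: "(\<Sum>i<K. R) = (P * Q - 1) * R"
      unfolding P_def Q_def by (simp flip: fps_of_nat)
    have "fps_const (int p ^ 2) = P * P"
      unfolding P_def by (simp add: power2_eq_square)
    then show "1 + P * (\<Sum>i<K. R) = 1 - P * R + fps_const (int p ^ 2) * (Q * R)"
      unfolding K by (simp add: algebra_simps)
  qed
  finally show ?thesis
    unfolding R_def P_def .
qed

lemma A_cong_mod_prime_square:
  assumes "prime p" "odd p" "s \<ge> 1" "p ^ s \<le> n"
  defines "K \<equiv> p ^ s - 1" and "R \<equiv> \<Sum>i<Suc n. mid_quot p (p ^ i)"
  shows "int p ^ 2 dvd A p ((p - 1) * K) n + int p * ((1 - fps_X) ^ K * R) $ n"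
proof -
  have p: "p > 1"
    using assms(1) prime_gt_1_nat by blast
  have "n < p ^ Suc n"
    using p by (rule less_power_Suc_self)
  then have "((1 - fps_X) ^ K * geom_fps (p ^ Suc n) ^ K * (1 - fps_const (int p) * R)) $ n
      = ((1 - fps_X) ^ K * (1 - fps_const (int p) * R)) $ n"
    using p geom_fps_power_mult_nth[of "p ^ Suc n" n "(1 - fps_X) ^ K * (1 - fps_const (int p) * R)"]
    by (simp add: mult_ac)
  also have "(1 - fps_X) ^ K * (1 - fps_const (int p) * R)
      = (1 - fps_X) ^ K - fps_const (int p) * ((1 - fps_X) ^ K * R)"
    by (simp add: algebra_simps)
  also have "\<dots> $ n = ((1 - fps_X) ^ K :: int fps) $ n - int p * ((1 - fps_X) ^ K * R) $ n"
    by simp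
  also have "((1 - fps_X) ^ K :: int fps) $ n = 0"
  proof (rule one_minus_X_power_nth_eq_0)
    have "0 < p ^ s"
      using p by simp
    then show "K < n"
      using assms(4) unfolding K_def by linarith
  qed
  finally have "((1 - fps_X) ^ K * geom_fps (p ^ Suc n) ^ K * (1 - fps_const (int p) * R)) $ n
      = - (int p * ((1 - fps_X) ^ K * R) $ n)"
    by simp
  moreover have "A p ((p - 1) * K) n = ((\<Prod>i<Suc n. geom_fps (p ^ i)) ^ ((p - 1) * K)) $ n"
    using p by (intro A_eq_nth) simp
  ultimately show ?thesis
    using fps_cong_nth[OF prod_geom_fps_pow_cong[OF assms(1-3), of "Suc n"], of n]
    unfolding K_def R_def by (simp del: prod.lessThan_Suc sum.lessThan_Suc)
qed

section \<open>Windows of last-digit coefficients\<close>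

text \<open>Dividing by p ^ multiplicity p N strips the trailing base-p zeros of N, so this is c applied
  to the last nonzero base-p digit of N.\<close>
definition digit_coeff :: "nat \<Rightarrow> nat \<Rightarrow> int" where
  "digit_coeff p N = periodic_mid_coeff p (N div p ^ multiplicity p N)"

lemma digit_coeff_not_dvd:
  assumes "prime p" "N > 0"
  shows "\<not> int p dvd digit_coeff p N"
  unfolding digit_coeff_def using assms
  by (intro prime_not_dvd_periodic_mid_coeff multiplicity_decompose) auto

lemma digit_coeff_prime_mult:
  assumes "prime p" "b > 0"
  shows "digit_coeff p (p * b) = digit_coeff p b"
proof -
  have "multiplicity p (p * b) = Suc (multiplicity p b)"
    using assms by (intro multiplicity_times_same) auto
  then show ?thesis
    using assms(1) prime_gt_0_nat by (simp add: digit_coeff_def)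
qed

lemma digit_coeff_not_dvd_eq:
  "\<not> p dvd N \<Longrightarrow> digit_coeff p N = periodic_mid_coeff p N"
  by (simp add: digit_coeff_def not_dvd_imp_multiplicity_0)

lemma sum_mid_quot_nth:
  assumes "prime p" "0 < N" "N < p ^ M"
  shows "(\<Sum>i<M. mid_quot p (p ^ i)) $ N = digit_coeff p N"
proof -
  define v where "v = multiplicity p N"
  have summand: "mid_quot p (p ^ i) $ N = (if i = v then digit_coeff p N else 0)" for i
  proof (cases "p ^ i dvd N")
    case True
    then have "i \<le> v"
      using assms(1,2) unfolding v_def by (auto intro!: multiplicity_geI)
    moreover have "p dvd N div p ^ i" if "i < v"
    proof -
      have "p ^ Suc i dvd N"
        using that unfolding v_def by (intro multiplicity_dvd') simp
      then show ?thesis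
        using assms(1) by (auto simp: prime_gt_0_nat elim!: dvdE)
    qed
    ultimately show ?thesis
      using True assms(1) by (auto simp: mid_quot_def digit_coeff_def periodic_mid_coeff_def v_def)
  next
    case False
    then show ?thesis
      using multiplicity_dvd[of p N] by (auto simp: mid_quot_def v_def)
  qed
  have "p ^ v \<le> N"
    using multiplicity_dvd[of p N] assms(2) unfolding v_def by (simp add: dvd_imp_le)
  then have "v < M"
    using assms(1,3) prime_gt_1_nat by (metis le_less_trans power_less_imp_less_exp)
  then show ?thesis
    unfolding fps_sum_nth summand by simp
qed

lemma window_sum_digit_coeff:
  assumes "prime p" "odd p"
  shows "\<exists>b>0. (\<Sum>N\<in>{Suc c..<Suc c + p ^ s}. digit_coeff p N) = digit_coeff p b"
proof (induction s arbitrary: c)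
  case 0
  show ?case by auto
next
  case (Suc s)
  have p: "p > 0"
    using assms(1) prime_gt_0_nat by blast
  define I where "I = {Suc c..<Suc c + p * p ^ s}"
  have decompose:
    "digit_coeff p N = (if p dvd N then digit_coeff p N else 0) + periodic_mid_coeff p N" for N
    by (simp add: periodic_mid_coeff_def digit_coeff_not_dvd_eq)
  have "(\<Sum>N\<in>I. periodic_mid_coeff p N) = 0"
    unfolding I_def using sum_periodic_mid_coeff[OF assms]
    by (intro sum_periodic_blocks_eq_0) simp_all
  moreover have "finite I"
    unfolding I_def by simp
  ultimately have "(\<Sum>N\<in>I. digit_coeff p N) = (\<Sum>N\<in>{N\<in>I. p dvd N}. digit_coeff p N)"
    by (subst decompose) (simp add: sum.distrib sum.inter_filter)
  also have "\<dots> = (\<Sum>b\<in>{Suc (c div p)..<Suc (c div p) + p ^ s}. digit_coeff p (p * b))"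
    unfolding I_def multiples_in_interval[OF p] using p by (simp add: sum.reindex inj_on_def)
  also have "\<dots> = (\<Sum>b\<in>{Suc (c div p)..<Suc (c div p) + p ^ s}. digit_coeff p b)"
    using assms(1) by (intro sum.cong) (auto simp: digit_coeff_prime_mult)
  finally show ?case
    using Suc[of "c div p"] unfolding I_def by simp
qed

lemma one_minus_X_pow_pred_prime_power_cong:
  assumes "prime p" "odd p"
  shows "fps_cong (int p) ((1 - fps_X) ^ (p ^ s - 1)) ((1 - fps_X ^ (p ^ s)) * geom_fps 1)"
proof -
  have "(1 - fps_X :: int fps) ^ (p ^ s - 1)
      = (1 - fps_X) ^ (p ^ s - 1) * ((1 - fps_X) * geom_fps 1)"
    using one_minus_X_power_mult_geom_fps[of 1] by simp
  also have "\<dots> = (1 - fps_X) ^ (p ^ s) * geom_fps 1"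
    using prime_gt_0_nat[OF assms(1)] by (simp add: mult.assoc[symmetric] power_Suc2[symmetric])
  also have "fps_cong (int p) \<dots> ((1 - fps_X ^ (p ^ s)) * geom_fps 1)"
    by (intro fps_cong_mult one_minus_X_pow_prime_power_cong[OF assms] fps_cong_refl)
  finally show ?thesis .
qed

lemma window_cong_mod_prime:
  assumes "prime p" "odd p" "p ^ s \<le> n"
  defines "R \<equiv> \<Sum>i<Suc n. mid_quot p (p ^ i)"
  shows "int p dvd ((1 - fps_X) ^ (p ^ s - 1) * R) $ n
    - (\<Sum>N\<in>{Suc (n - p ^ s)..<Suc n}. digit_coeff p N)"
proof -
  have "n < p ^ Suc n"
    using assms(1) prime_gt_1_nat by (intro less_power_Suc_self) blast
  then have "((1 - fps_X ^ (p ^ s)) * geom_fps 1 * R) $ n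
      = (\<Sum>N\<in>{Suc (n - p ^ s)..<Suc n}. digit_coeff p N)"
    unfolding window_sum_nth[OF assms(3)] R_def using assms(1)
    by (intro sum.cong refl sum_mid_quot_nth) auto
  moreover have "fps_cong (int p)
      ((1 - fps_X) ^ (p ^ s - 1) * R) ((1 - fps_X ^ (p ^ s)) * geom_fps 1 * R)"
    by (intro fps_cong_mult one_minus_X_pow_pred_prime_power_cong[OF assms(1,2)] fps_cong_refl)
  ultimately show ?thesis
    using fps_cong_nth by metis
qed

theorem theorem3p1:
  fixes p s n :: nat
  assumes "prime p" and "p \<ge> 3" and "s \<ge> 1" and "n > p ^ s"
  shows "multiplicity (int p) (A p ((p - 1) * (p ^ s - 1)) n) = 1"
proof -
  have odd: "odd p"
    using assms(1,2) by (intro prime_odd_nat) auto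
  define T where "T = ((1 - fps_X) ^ (p ^ s - 1) * (\<Sum>i<Suc n. mid_quot p (p ^ i))) $ n"
  obtain b where "b > 0"
    and "(\<Sum>N\<in>{Suc (n - p ^ s)..<Suc (n - p ^ s) + p ^ s}. digit_coeff p N) = digit_coeff p b"
    using window_sum_digit_coeff[OF assms(1) odd] by blast
  moreover have "Suc (n - p ^ s) + p ^ s = Suc n"
    using assms(4) by simp
  ultimately have "int p dvd T - digit_coeff p b"
    using window_cong_mod_prime[OF assms(1) odd, of s n] assms(4) unfolding T_def by simp
  then have "\<not> int p dvd T"
    using digit_coeff_not_dvd[OF assms(1) \<open>b > 0\<close>] dvd_diff[of "int p" T "T - digit_coeff p b"]
    by auto
  moreover have "int p ^ 2 dvd A p ((p - 1) * (p ^ s - 1)) n + int p * T"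
    unfolding T_def using assms odd by (intro A_cong_mod_prime_square) auto
  ultimately show ?thesis
    using assms(1) by (intro multiplicity_eq_1_if_dvd_add) auto
qed

end
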